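(* Let $k\ge1$ with $2^k\le n+1$. Let $\mathbf{SB}_n^{2^k-1}$ be the set of all $f\in\mathbf{SB}_n$ with $\deg(f)\le 2^k-1$. Then $\mathbf{SB}_n^{2^k-1}$ equals the subring of $\mathbf{B}_n$ generated (together with the constants) by $\sigma_1,\sigma_2,\sigma_4,\dots,\sigma_{2^{k-1}}$, and the map $\tau:\mathbf{B}_k\to\mathbf{SB}_n^{2^k-1}$, $F(y_1,\dots,y_k)\mapsto F(\sigma_1,\sigma_2,\sigma_4,\dots,\sigma_{2^{k-1}})$ is a ring isomorphism.
   Context: $\mathbf{B}_n$ is the ring of Boolean functions $\mathbb{F}_2^n\to\mathbb{F}_2$ under pointwise addition and multiplication; $\mathbf{SB}_n$ is the subset of symmetric functions. $\sigma_i$ is the $i$-th elementary symmetric function of $x_1,\dots,x_n$ over $\mathbb{F}_2$. $\deg$ denotes algebraic degree (degree of the algebraic normal form). *)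

theory Defs
  imports "HOL-Combinatorics.Permutations" "HOL-Algebra.Algebra"
begin

(* F_2 is modelled by bool (addition = xor, i.e. (\<noteq>), multiplication = (\<and>)).
   A point x = (x_1,...,x_n) of F_2^n (coordinates indexed 0..n-1) is modelled by its
   support {i. x_i = 1}, a subset of {..<n}.
   A Boolean function F_2^n -> F_2 is a predicate on nat sets which is False outside
   Pow {..<n} (canonical representative, so that equality of functions is HOL equality). *)

definition BF :: "nat \<Rightarrow> (nat set \<Rightarrow> bool) set" where
  "BF n = {f. \<forall>x. \<not> x \<subseteq> {..<n} \<longrightarrow> \<not> f x}"

definition bf_mult :: "(nat set \<Rightarrow> bool) \<Rightarrow> (nat set \<Rightarrow> bool) \<Rightarrow> nat set \<Rightarrow> bool" where
  "bf_mult f g = (\<lambda>x. f x \<and> g x)"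

definition bf_add :: "(nat set \<Rightarrow> bool) \<Rightarrow> (nat set \<Rightarrow> bool) \<Rightarrow> nat set \<Rightarrow> bool" where
  "bf_add f g = (\<lambda>x. f x \<noteq> g x)"

definition bf_one :: "nat \<Rightarrow> nat set \<Rightarrow> bool" where
  "bf_one n = (\<lambda>x. x \<subseteq> {..<n})"

definition bf_zero :: "nat set \<Rightarrow> bool" where
  "bf_zero = (\<lambda>x. False)"

definition BF_ring :: "nat \<Rightarrow> (nat set \<Rightarrow> bool) ring" where
  "BF_ring n = \<lparr>carrier = BF n, monoid.mult = bf_mult, one = bf_one n, ring.zero = bf_zero, ring.add = bf_add\<rparr>"

definition symmetric_BF :: "nat \<Rightarrow> (nat set \<Rightarrow> bool) \<Rightarrow> bool" where
  "symmetric_BF n f \<longleftrightarrow>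
     (\<forall>\<pi>. \<pi> permutes {..<n} \<longrightarrow> (\<forall>x. x \<subseteq> {..<n} \<longrightarrow> f (\<pi> ` x) = f x))"

(* algebraic degree \<le> d: f has an algebraic normal form
     f(x) = XOR_{T} a_T \<prod>_{i\<in>T} x_i
   all of whose monomials have degree \<le> d.  (The monomial x_T is 1 at x iff T \<subseteq> x.) *)
definition deg_le :: "nat \<Rightarrow> (nat set \<Rightarrow> bool) \<Rightarrow> nat \<Rightarrow> bool" where
  "deg_le n f d \<longleftrightarrow>
     (\<exists>a :: nat set \<Rightarrow> bool.
        (\<forall>x. x \<subseteq> {..<n} \<longrightarrow> f x = odd (card {T. T \<subseteq> x \<and> a T})) \<and>
        (\<forall>T. T \<subseteq> {..<n} \<and> a T \<longrightarrow> card T \<le> d))"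

definition SB_deg :: "nat \<Rightarrow> nat \<Rightarrow> (nat set \<Rightarrow> bool) set" where
  "SB_deg n d = {f \<in> BF n. symmetric_BF n f \<and> deg_le n f d}"

definition SB_deg_ring :: "nat \<Rightarrow> nat \<Rightarrow> (nat set \<Rightarrow> bool) ring" where
  "SB_deg_ring n d = (BF_ring n) \<lparr> carrier := SB_deg n d \<rparr>"

definition esym :: "nat \<Rightarrow> nat \<Rightarrow> nat set \<Rightarrow> bool" where
  "esym n i x \<longleftrightarrow> x \<subseteq> {..<n} \<and> odd (card {T. T \<subseteq> x \<and> card T = i})"

(* tau : B_k -> B_n,  F(y_1..y_k) \<mapsto> F(sigma_1, sigma_2, sigma_4, ..., sigma_{2^(k-1)}) ;
   coordinate y_{j+1} (index j < k) is replaced by sigma_{2^j} *)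
definition tau :: "nat \<Rightarrow> nat \<Rightarrow> (nat set \<Rightarrow> bool) \<Rightarrow> (nat set \<Rightarrow> bool)" where
  "tau n k F = (\<lambda>x. x \<subseteq> {..<n} \<and> F {j. j < k \<and> esym n (2 ^ j) x})"

end

theory Submission
  imports Defs
begin

(* The key fact is Lucas's theorem mod 2: sigma_i(x) = (|x| choose i) mod 2, so sigma_{2^j}(x)
   is the j-th binary digit of the weight |x|.  Hence tau F (x) = F(bits of |x| below k): the map
   tau substitutes the binary expansion of the weight into F. *)


section \<open>Lucas's theorem modulo 2\<close>

lemma binomial_double_parity:
  "(odd (2 * a choose (2 * c)) \<longleftrightarrow> odd (a choose c)) \<and> even (2 * a choose Suc (2 * c))"
proof (induction a arbitrary: c)
  case 0 then show ?case by (cases c) auto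
next
  case (Suc a)
  have pascal2: "\<And>x i. (Suc (Suc x) choose Suc (Suc i)) = (x choose Suc (Suc i)) + 2 * (x choose Suc i) + (x choose i)"
    by simp
  have double_Suc: "2 * Suc a = Suc (Suc (2 * a))" by simp
  show ?case
  proof (cases c)
    case 0
    then show ?thesis by (simp add: double_Suc)
  next
    case (Suc c')
    have "2 * c = Suc (Suc (2 * c'))" using Suc by simp
    then have even_idx: "(2 * Suc a choose 2 * c) = (2 * a choose 2 * c) + 2 * (2 * a choose Suc (2 * c')) + (2 * a choose 2 * c')"
      and odd_idx: "(2 * Suc a choose Suc (2 * c)) = (2 * a choose Suc (2 * c)) + 2 * (2 * a choose 2 * c) + (2 * a choose Suc (2 * c'))"
      using pascal2 double_Suc by simp_all
    have "(Suc a choose c) = (a choose c) + (a choose c')" using Suc by simp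
    then show ?thesis using even_idx odd_idx Suc.IH[of c] Suc.IH[of c'] by auto
  qed
qed

lemma binomial_parity_halves:
  "odd (m choose i) \<longleftrightarrow> (odd i \<longrightarrow> odd m) \<and> odd ((m div 2) choose (i div 2))"
proof -
  obtain a c where m: "m = 2 * a \<or> m = Suc (2 * a)" and i: "i = 2 * c \<or> i = Suc (2 * c)"
    by (metis oddE evenE Suc_eq_plus1)
  have double: "odd (2 * a choose 2 * c) \<longleftrightarrow> odd (a choose c)" "even (2 * a choose Suc (2 * c))"
    using binomial_double_parity[of a c] by simp_all
  have odd_odd: "(Suc (2 * a) choose Suc (2 * c)) = (2 * a choose 2 * c) + (2 * a choose Suc (2 * c))"
    by simp
  have odd_even: "odd (Suc (2 * a) choose 2 * c) \<longleftrightarrow> odd (a choose c)"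
  proof (cases c)
    case (Suc c')
    then have "(Suc (2 * a) choose 2 * c) = (2 * a choose 2 * c) + (2 * a choose Suc (2 * c'))"
      by simp
    then show ?thesis using double binomial_double_parity[of a c'] by simp
  qed simp
  from m i consider
      "m = 2 * a" "i = 2 * c" | "m = 2 * a" "i = Suc (2 * c)"
    | "m = Suc (2 * a)" "i = 2 * c" | "m = Suc (2 * a)" "i = Suc (2 * c)"
    by blast
  then show ?thesis
  proof cases
    case 1 then show ?thesis using double by simp
  next
    case 2 then show ?thesis using double by simp
  next
    case 3 then show ?thesis using odd_even by simp
  next
    case 4 then show ?thesis using odd_odd double by simp
  qed
qed

lemma odd_binomial_iff_bits:
  "odd (m choose i) \<longleftrightarrow> (\<forall>j. bit i j \<longrightarrow> bit m j)"
proof (induction m arbitrary: i rule: less_induct)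
  case (less m)
  show ?case
  proof (cases "m = 0")
    case True
    have "(\<forall>j. \<not> bit i j) \<longleftrightarrow> i = 0" by (auto simp: bit_eq_iff)
    moreover have "odd (0 choose i) \<longleftrightarrow> i = 0" by (cases i) simp_all
    ultimately show ?thesis using True by simp
  next
    case False
    have "(\<forall>j. bit i j \<longrightarrow> bit m j) \<longleftrightarrow> (odd i \<longrightarrow> odd m) \<and> (\<forall>j. bit (i div 2) j \<longrightarrow> bit (m div 2) j)"
      by (metis bit_0 bit_Suc not0_implies_Suc)
    then show ?thesis using less False binomial_parity_halves[of m i] by simp
  qed
qed


section \<open>Counting subsets modulo 2\<close>

lemma card_supersets_within:
  assumes "finite x" "y \<subseteq> x"
  shows "card {T. T \<subseteq> x \<and> y \<subseteq> T} = 2 ^ card (x - y)"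
proof -
  have "{T. T \<subseteq> x \<and> y \<subseteq> T} = (\<lambda>U. U \<union> y) ` Pow (x - y)"
  proof (intro equalityI subsetI)
    fix T assume "T \<in> {T. T \<subseteq> x \<and> y \<subseteq> T}"
    then show "T \<in> (\<lambda>U. U \<union> y) ` Pow (x - y)" by (intro image_eqI[of _ _ "T - y"]) auto
  qed (use assms in auto)
  moreover have "inj_on (\<lambda>U. U \<union> y) (Pow (x - y))" by (auto simp: inj_on_def)
  ultimately show ?thesis using assms by (simp add: card_image card_Pow)
qed

(* Binary Moebius inversion: over F_2, the transform g \<mapsto> (T \<mapsto> \<Sum>_{y\<subseteq>T} g y) is an involution.
   It identifies the algebraic normal form coefficients of a function. *)
lemma moebius_inversion_mod2:
  assumes "finite x"
  shows "odd (card {T. T \<subseteq> x \<and> odd (card {y. y \<subseteq> T \<and> g y})}) \<longleftrightarrow> g x"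
proof -
  have fin: "\<And>T. T \<subseteq> x \<Longrightarrow> finite T" using assms finite_subset by blast
  have "even (card {T. T \<subseteq> x \<and> odd (card {y. y \<subseteq> T \<and> g y})})
     \<longleftrightarrow> even (\<Sum>T\<in>Pow x. card {y. y \<subseteq> T \<and> g y})"
    using even_sum_iff[of "Pow x" "\<lambda>T. card {y. y \<subseteq> T \<and> g y}"] assms by (simp add: Pow_def)
  also have "(\<Sum>T\<in>Pow x. card {y. y \<subseteq> T \<and> g y}) = (\<Sum>T\<in>Pow x. \<Sum>y\<in>{y\<in>Pow x. y \<subseteq> T}. if g y then 1 else 0)"
  proof (rule sum.cong[OF refl])
    fix T assume T: "T \<in> Pow x"
    then have "{y\<in>Pow x. y \<subseteq> T} = Pow T" by auto
    moreover have "card {y. y \<subseteq> T \<and> g y} = (\<Sum>y\<in>Pow T. if g y then 1 else 0)"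
      using fin[of T] T by (simp add: sum.If_cases Pow_def Collect_conj_eq)
    ultimately show "card {y. y \<subseteq> T \<and> g y} = (\<Sum>y\<in>{y\<in>Pow x. y \<subseteq> T}. if g y then 1 else 0)" by simp
  qed
  also have "\<dots> = (\<Sum>y\<in>Pow x. \<Sum>T\<in>{T\<in>Pow x. y \<subseteq> T}. if g y then 1 else 0)"
    using assms by (intro sum.swap_restrict) auto
  also have "\<dots> = (\<Sum>y\<in>Pow x. if g y then 2 ^ card (x - y) else 0)"
    using card_supersets_within[OF assms] by (intro sum.cong) (auto simp: Pow_def)
  finally have "even (card {T. T \<subseteq> x \<and> odd (card {y. y \<subseteq> T \<and> g y})})
     \<longleftrightarrow> even (card {y\<in>Pow x. odd (if g y then 2 ^ card (x - y) else 0::nat)})"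
    using even_sum_iff[of "Pow x" "\<lambda>y. if g y then 2 ^ card (x - y) else 0::nat"] assms by simp
  also have "{y\<in>Pow x. odd (if g y then 2 ^ card (x - y) else 0::nat)} = (if g x then {x} else {})"
  proof -
    have "\<And>y. y \<subseteq> x \<Longrightarrow> card (x - y) = 0 \<longleftrightarrow> y = x"
      using assms by (metis Diff_eq_empty_iff card_0_eq finite_Diff subset_antisym)
    then show ?thesis by auto
  qed
  finally show ?thesis by simp
qed

lemma card_subsets_by_size:
  assumes "finite x"
  shows "card {T. T \<subseteq> x \<and> P (card T)} = (\<Sum>i\<in>{i. i \<le> card x \<and> P i}. card x choose i)"
proof -
  have "{T. T \<subseteq> x \<and> P (card T)} = (\<Union>i\<in>{i. i \<le> card x \<and> P i}. {T. T \<subseteq> x \<and> card T = i})"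
    using assms by (auto intro: card_mono)
  moreover have "card (\<Union>i\<in>{i. i \<le> card x \<and> P i}. {T. T \<subseteq> x \<and> card T = i})
     = (\<Sum>i\<in>{i. i \<le> card x \<and> P i}. card {T. T \<subseteq> x \<and> card T = i})"
    using assms by (intro card_UN_disjoint) (auto intro: finite_subset)
  ultimately show ?thesis using assms by (simp add: n_subsets)
qed


section \<open>Binary digits as subsets and the substitution map\<close>

definition bits :: "nat \<Rightarrow> nat \<Rightarrow> nat set" where
  "bits k m = {j. j < k \<and> bit m j}"

lemma bits_subset: "bits k m \<subseteq> {..<k}"
  by (auto simp: bits_def)

lemma bit_below_power: "i < 2 ^ k \<Longrightarrow> bit (i::nat) j \<Longrightarrow> j < k"
  by (metis bit_take_bit_iff take_bit_nat_eq_self_iff)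

lemma bits_inj: "inj_on (bits k) {..<2 ^ k}"
proof (rule inj_onI)
  fix m m' :: nat assume m: "m \<in> {..<2 ^ k}" "m' \<in> {..<2 ^ k}" "bits k m = bits k m'"
  have "bit m j = bit m' j" for j
    using m bit_below_power[of m k j] bit_below_power[of m' k j] unfolding bits_def by auto
  then show "m = m'" by (simp add: bit_eq_iff)
qed

lemma bits_image: "bits k ` {..<2 ^ k} = Pow {..<k}"
proof (rule card_subset_eq)
  show "bits k ` {..<2 ^ k} \<subseteq> Pow {..<k}" using bits_subset by auto
  show "card (bits k ` {..<2 ^ k}) = card (Pow {..<k})"
    using bits_inj by (simp add: card_image card_Pow)
qed simp

lemma odd_binomial_iff_bits_subset: "i < 2 ^ k \<Longrightarrow> odd (m choose i) \<longleftrightarrow> bits k i \<subseteq> bits k m"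
  unfolding odd_binomial_iff_bits bits_def using bit_below_power by blast

lemma esym_eq_odd_binomial: "esym n i x \<longleftrightarrow> x \<subseteq> {..<n} \<and> odd (card x choose i)"
proof -
  have "x \<subseteq> {..<n} \<Longrightarrow> finite x" using finite_subset by blast
  then show ?thesis unfolding esym_def using n_subsets[of x i] by auto
qed

lemma esym_power_of_two: "esym n (2 ^ j) x \<longleftrightarrow> x \<subseteq> {..<n} \<and> bit (card x) j"
  unfolding esym_eq_odd_binomial odd_binomial_iff_bits by (auto simp: bit_exp_iff)

lemma tau_weight: "tau n k F x \<longleftrightarrow> x \<subseteq> {..<n} \<and> F (bits k (card x))"
proof (cases "x \<subseteq> {..<n}")
  case True
  then have "{j. j < k \<and> esym n (2 ^ j) x} = bits k (card x)" by (auto simp: bits_def esym_power_of_two)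
  then show ?thesis using True by (simp add: tau_def)
qed (simp add: tau_def)

lemma tau_BF: "tau n k F \<in> BF n"
  by (auto simp: BF_def tau_def)

lemma tau_symmetric: "symmetric_BF n (tau n k F)"
  unfolding symmetric_BF_def
proof (intro allI impI)
  fix \<pi> x assume \<pi>: "\<pi> permutes {..<n}" and x: "x \<subseteq> {..<n}"
  have "card (\<pi> ` x) = card x" using \<pi> by (meson card_image inj_on_subset permutes_inj subset_UNIV)
  moreover have "\<pi> ` x \<subseteq> {..<n}" using \<pi> x by (metis image_mono permutes_image)
  ultimately show "tau n k F (\<pi> ` x) = tau n k F x" using x by (simp add: tau_weight)
qed

(* tau is injective as soon as every weight below 2^k is realised by a point of F_2^n. *)
lemma tau_inj:
  assumes "2 ^ k \<le> n + 1"
  shows "inj_on (tau n k) (BF k)"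
proof (rule inj_onI)
  fix F G assume F: "F \<in> BF k" and G: "G \<in> BF k" and eq: "tau n k F = tau n k G"
  have "F S = G S" for S
  proof (cases "S \<subseteq> {..<k}")
    case True
    then obtain m where m: "m < 2 ^ k" "S = bits k m" using bits_image by (metis PowI imageE lessThan_iff)
    have "{..<m} \<subseteq> {..<n}" using m assms by auto
    then show ?thesis using fun_cong[OF eq, of "{..<m}"] m by (simp add: tau_weight)
  qed (use F G in \<open>simp add: BF_def\<close>)
  then show "F = G" by blast
qed


section \<open>Algebraic normal forms on B_k\<close>

(* The function on F_2^k whose ANF has the monomial y_{bits k i} exactly when c i holds. *)
definition anf :: "nat \<Rightarrow> (nat \<Rightarrow> bool) \<Rightarrow> nat set \<Rightarrow> bool" where
  "anf k c = (\<lambda>S. S \<subseteq> {..<k} \<and> odd (card {i. i < 2 ^ k \<and> c i \<and> bits k i \<subseteq> S}))"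

lemma anf_BF: "anf k c \<in> BF k"
  by (auto simp: anf_def BF_def)

(* Existence of the algebraic normal form, obtained by Moebius inversion. *)
lemma BF_has_anf:
  assumes "F \<in> BF k"
  shows "\<exists>c. F = anf k c"
proof -
  define b where "b R = odd (card {y. y \<subseteq> R \<and> F y})" for R
  define c where "c i = b (bits k i)" for i
  have "F S = anf k c S" for S
  proof (cases "S \<subseteq> {..<k}")
    case True
    have "F S \<longleftrightarrow> odd (card {R. R \<subseteq> S \<and> b R})"
      using moebius_inversion_mod2[of S F] True finite_subset by (auto simp: b_def)
    also have "{R. R \<subseteq> S \<and> b R} = bits k ` {i. i < 2 ^ k \<and> c i \<and> bits k i \<subseteq> S}"
    proof (intro equalityI subsetI)
      fix R assume R: "R \<in> {R. R \<subseteq> S \<and> b R}"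
      then have "R \<in> bits k ` {..<2 ^ k}" using True bits_image by auto
      then show "R \<in> bits k ` {i. i < 2 ^ k \<and> c i \<and> bits k i \<subseteq> S}" using R by (auto simp: c_def)
    qed (auto simp: c_def)
    also have "card \<dots> = card {i. i < 2 ^ k \<and> c i \<and> bits k i \<subseteq> S}"
      by (rule card_image, rule inj_on_subset[OF bits_inj]) auto
    finally show ?thesis using True by (simp add: anf_def)
  qed (use assms in \<open>simp add: anf_def BF_def\<close>)
  then show ?thesis by blast
qed

(* By Lucas, counting the subsets of x of size i < 2^k with c i is the same, mod 2, as
   counting the monomials y_{bits k i} of anf k c dividing the digits of |x|. *)
lemma odd_card_small_subsets:
  assumes "finite x"
  shows "odd (card {T. T \<subseteq> x \<and> card T < 2 ^ k \<and> c (card T)})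
     \<longleftrightarrow> odd (card {i. i < 2 ^ k \<and> c i \<and> bits k i \<subseteq> bits k (card x)})"
proof -
  have "even (card {T. T \<subseteq> x \<and> card T < 2 ^ k \<and> c (card T)})
     \<longleftrightarrow> even (\<Sum>i\<in>{i. i \<le> card x \<and> i < 2 ^ k \<and> c i}. card x choose i)"
    using card_subsets_by_size[OF assms, of "\<lambda>i. i < 2 ^ k \<and> c i"] by simp
  also have "\<dots> \<longleftrightarrow> even (card {i\<in>{i. i \<le> card x \<and> i < 2 ^ k \<and> c i}. odd (card x choose i)})"
    by (rule even_sum_iff) simp
  also have "{i\<in>{i. i \<le> card x \<and> i < 2 ^ k \<and> c i}. odd (card x choose i)}
     = {i. i < 2 ^ k \<and> c i \<and> bits k i \<subseteq> bits k (card x)}"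
  proof -
    have "\<And>i. odd (card x choose i) \<Longrightarrow> i \<le> card x" by (metis binomial_eq_0 not_less odd_pos less_numeral_extra(3))
    then show ?thesis using odd_binomial_iff_bits_subset by blast
  qed
  finally show ?thesis by simp
qed

lemma tau_anf_symmetric_anf:
  assumes "x \<subseteq> {..<n}"
  shows "tau n k (anf k c) x \<longleftrightarrow> odd (card {T. T \<subseteq> x \<and> card T < 2 ^ k \<and> c (card T)})"
  using assms odd_card_small_subsets[of x k c] finite_subset
  by (auto simp: tau_weight anf_def bits_subset)

lemma tau_into_SB:
  assumes "F \<in> BF k"
  shows "tau n k F \<in> SB_deg n (2 ^ k - 1)"
proof -
  obtain c where F: "F = anf k c" using BF_has_anf[OF assms] by blast
  have "deg_le n (tau n k F) (2 ^ k - 1)"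
    unfolding deg_le_def F
    by (rule exI[of _ "\<lambda>T. card T < 2 ^ k \<and> c (card T)"]) (auto simp: tau_anf_symmetric_anf)
  then show ?thesis using tau_symmetric tau_BF by (simp add: SB_deg_def)
qed


section \<open>Symmetric functions of low degree lie in the image of tau\<close>

lemma permutation_to_initial_segment:
  assumes "A \<subseteq> {..<n}"
  shows "\<exists>\<pi>. \<pi> permutes {..<n} \<and> \<pi> ` A = {..<card A}"
proof -
  have fA: "finite A" using assms finite_subset by blast
  have cA: "card A \<le> n" using assms by (metis card_lessThan card_mono finite_lessThan)
  obtain g where g: "bij_betw g A {..<card A}"
    using fA by (metis card_lessThan finite_lessThan finite_same_card_bij)
  have "card ({..<n} - A) = card ({..<n} - {..<card A})"
    using assms cA fA by (simp add: card_Diff_subset)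
  then obtain h where h: "bij_betw h ({..<n} - A) ({..<n} - {..<card A})"
    by (metis finite_Diff finite_lessThan finite_same_card_bij)
  define p where "p x = (if x \<in> A then g x else if x \<in> {..<n} then h x else x)" for x
  have "bij_betw p A {..<card A}" using g by (rule bij_betw_cong[THEN iffD1, rotated]) (simp add: p_def)
  moreover have "bij_betw p ({..<n} - A) ({..<n} - {..<card A})"
    using h by (rule bij_betw_cong[THEN iffD1, rotated]) (simp add: p_def)
  ultimately have "bij_betw p (A \<union> ({..<n} - A)) ({..<card A} \<union> ({..<n} - {..<card A}))"
    by (rule bij_betw_combine) auto
  moreover have "A \<union> ({..<n} - A) = {..<n}" "{..<card A} \<union> ({..<n} - {..<card A}) = {..<n}"
    using assms cA by auto
  ultimately have "p permutes {..<n}" by (intro bij_imp_permutes) (auto simp: p_def)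
  moreover have "p ` A = {..<card A}" using g by (simp add: bij_betw_def p_def)
  ultimately show ?thesis by blast
qed

lemma symmetric_BF_weight:
  assumes "symmetric_BF n f" "y \<subseteq> {..<n}"
  shows "f y = f {..<card y}"
proof -
  obtain p where "p permutes {..<n}" "p ` y = {..<card y}"
    using permutation_to_initial_segment[OF assms(2)] by blast
  then show ?thesis using assms unfolding symmetric_BF_def by metis
qed

lemma symmetric_anf_coeff:
  assumes sym: "symmetric_BF n f"
    and a: "\<And>x. x \<subseteq> {..<n} \<Longrightarrow> f x = odd (card {T. T \<subseteq> x \<and> a T})"
    and T: "T \<subseteq> {..<n}"
  shows "a T = a {..<card T}"
proof -
  have coeff: "a U = odd (\<Sum>i\<in>{i. i \<le> card U \<and> f {..<i}}. card U choose i)" if U: "U \<subseteq> {..<n}" for U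
  proof -
    have "a U = odd (card {S. S \<subseteq> U \<and> odd (card {y. y \<subseteq> S \<and> a y})})"
      using moebius_inversion_mod2[of U a] U finite_subset by auto
    also have "{S. S \<subseteq> U \<and> odd (card {y. y \<subseteq> S \<and> a y})} = {S. S \<subseteq> U \<and> f {..<card S}}"
      using a symmetric_BF_weight[OF sym] U by (metis (no_types, lifting) order_trans)
    also have "card \<dots> = (\<Sum>i\<in>{i. i \<le> card U \<and> f {..<i}}. card U choose i)"
      using U finite_subset by (intro card_subsets_by_size) auto
    finally show ?thesis .
  qed
  have "card T \<le> n" using T by (metis card_lessThan card_mono finite_lessThan)
  then show ?thesis using coeff[OF T] coeff[of "{..<card T}"] by simp
qed

(* Conversely, a symmetric f of degree < 2^k is tau of the function whose ANF coefficient
   for bits k i is the ANF coefficient of f on the monomial x_0 ... x_(i-1). *)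
lemma SB_in_tau_image:
  assumes f: "f \<in> SB_deg n (2 ^ k - 1)"
  shows "f \<in> tau n k ` BF k"
proof -
  have fBF: "f \<in> BF n" and sym: "symmetric_BF n f" and deg: "deg_le n f (2 ^ k - 1)"
    using f by (auto simp: SB_deg_def)
  obtain a where a: "\<And>x. x \<subseteq> {..<n} \<Longrightarrow> f x = odd (card {T. T \<subseteq> x \<and> a T})"
    and small: "\<And>T. T \<subseteq> {..<n} \<Longrightarrow> a T \<Longrightarrow> card T \<le> 2 ^ k - 1"
    using deg unfolding deg_le_def by blast
  define c where "c i = a {..<i}" for i
  have coeff: "a T \<longleftrightarrow> card T < 2 ^ k \<and> c (card T)" if T: "T \<subseteq> {..<n}" for T
  proof -
    have "a T = c (card T)" using symmetric_anf_coeff[OF sym a T] by (simp add: c_def)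
    moreover have "a T \<Longrightarrow> card T < 2 ^ k"
      using small[OF T] zero_less_power[of "2::nat" k] by linarith
    ultimately show ?thesis by blast
  qed
  have "f x = tau n k (anf k c) x" for x
  proof (cases "x \<subseteq> {..<n}")
    case True
    then have "{T. T \<subseteq> x \<and> a T} = {T. T \<subseteq> x \<and> card T < 2 ^ k \<and> c (card T)}"
      using coeff by blast
    then show ?thesis using True a tau_anf_symmetric_anf by simp
  qed (use fBF in \<open>simp add: BF_def tau_weight\<close>)
  then show ?thesis using anf_BF by blast
qed

lemma tau_image: "tau n k ` BF k = SB_deg n (2 ^ k - 1)"
  using tau_into_SB SB_in_tau_image by blast


section \<open>tau is a ring homomorphism onto the subring generated by the sigma_{2^j}\<close>

lemma BF_ring_simps:
  "carrier (BF_ring n) = BF n" "monoid.mult (BF_ring n) = bf_mult" "monoid.one (BF_ring n) = bf_one n"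
  "ring.zero (BF_ring n) = bf_zero" "ring.add (BF_ring n) = bf_add"
  by (simp_all add: BF_ring_def)

lemma SB_ring_simps:
  "carrier (SB_deg_ring n d) = SB_deg n d" "monoid.mult (SB_deg_ring n d) = bf_mult"
  "monoid.one (SB_deg_ring n d) = bf_one n" "ring.add (SB_deg_ring n d) = bf_add"
  by (simp_all add: SB_deg_ring_def BF_ring_def)

lemma tau_add: "tau n k (bf_add F G) = bf_add (tau n k F) (tau n k G)"
  by (auto simp: tau_def bf_add_def fun_eq_iff)

lemma tau_mult: "tau n k (bf_mult F G) = bf_mult (tau n k F) (tau n k G)"
  by (auto simp: tau_def bf_mult_def fun_eq_iff)

lemma tau_one: "tau n k (bf_one k) = bf_one n"
  by (auto simp: tau_weight bf_one_def fun_eq_iff bits_subset)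

lemma tau_ring_hom: "tau n k \<in> ring_hom (BF_ring k) (SB_deg_ring n (2 ^ k - 1))"
  by (rule ring_hom_memI)
    (simp_all only: BF_ring_simps SB_ring_simps tau_add tau_mult tau_one tau_into_SB)

(* In characteristic 2 every element is its own additive inverse. *)
lemma BF_a_inv:
  assumes "h \<in> BF n"
  shows "a_inv (BF_ring n) h = h"
proof -
  have "a_inv (BF_ring n) h = (THE y. y \<in> BF n \<and> bf_add h y = bf_zero \<and> bf_add y h = bf_zero)"
    unfolding a_inv_def m_inv_def by (simp only: partial_object.simps monoid.simps BF_ring_simps)
  also have "\<dots> = h"
  proof (rule the_equality)
    show "h \<in> BF n \<and> bf_add h h = bf_zero \<and> bf_add h h = bf_zero"
      using assms by (simp add: bf_add_def bf_zero_def)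
    fix y assume "y \<in> BF n \<and> bf_add h y = bf_zero \<and> bf_add y h = bf_zero"
    then have "bf_add h y x = bf_zero x" for x by simp
    then show "y = h" unfolding bf_add_def bf_zero_def by blast
  qed
  finally show ?thesis .
qed

abbreviation sigma_ring :: "nat \<Rightarrow> nat \<Rightarrow> (nat set \<Rightarrow> bool) set" where
  "sigma_ring n k \<equiv> generate_ring (BF_ring n) ((\<lambda>j. esym n (2 ^ j)) ` {..<k})"

lemma sigma_ring_in_tau_image: "h \<in> sigma_ring n k \<Longrightarrow> h \<in> tau n k ` BF k"
proof (induction rule: generate_ring.induct)
  case one
  have "bf_one k \<in> BF k" by (simp add: BF_def bf_one_def)
  then have "tau n k (bf_one k) \<in> tau n k ` BF k" by (rule imageI)
  then show ?case by (simp only: BF_ring_simps tau_one)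
next
  case (incl h)
  then obtain j where j: "j < k" "h = esym n (2 ^ j)" by auto
  have "h = tau n k (\<lambda>S. S \<subseteq> {..<k} \<and> j \<in> S)"
    using j by (auto simp: tau_weight esym_power_of_two bits_subset bits_def fun_eq_iff)
  moreover have "(\<lambda>S. S \<subseteq> {..<k} \<and> j \<in> S) \<in> BF k" by (simp add: BF_def)
  ultimately show ?case by blast
next
  case (a_inv h)
  then have "h \<in> BF n" using tau_BF by blast
  then have "a_inv (BF_ring n) h = h" by (rule BF_a_inv)
  then show ?case using a_inv.IH by (simp only:)
next
  case (eng_add h1 h2)
  then obtain F G where FG: "F \<in> BF k" "G \<in> BF k" and "h1 = tau n k F" "h2 = tau n k G" by blast
  then have "ring.add (BF_ring n) h1 h2 = tau n k (bf_add F G)" by (simp add: BF_ring_simps tau_add)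
  moreover have "bf_add F G \<in> BF k" using FG by (auto simp: BF_def bf_add_def)
  ultimately show ?case by blast
next
  case (eng_mult h1 h2)
  then obtain F G where FG: "F \<in> BF k" "G \<in> BF k" and "h1 = tau n k F" "h2 = tau n k G" by blast
  then have "monoid.mult (BF_ring n) h1 h2 = tau n k (bf_mult F G)" by (simp add: BF_ring_simps tau_mult)
  moreover have "bf_mult F G \<in> BF k" using FG by (auto simp: BF_def bf_mult_def)
  ultimately show ?case by blast
qed

(* The image of the monomial y_R is the product of the sigma_{2^j}, j \<in> R. *)
lemma tau_monomial_in_sigma_ring:
  "finite R \<Longrightarrow> R \<subseteq> {..<k} \<Longrightarrow> (\<lambda>x. x \<subseteq> {..<n} \<and> R \<subseteq> bits k (card x)) \<in> sigma_ring n k"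
proof (induction R rule: finite_induct)
  case empty
  have "(\<lambda>x. x \<subseteq> {..<n} \<and> {} \<subseteq> bits k (card x)) = monoid.one (BF_ring n)"
    by (simp add: BF_ring_simps bf_one_def)
  then show ?case by (simp only: generate_ring.one)
next
  case (insert j R)
  have product: "(\<lambda>x. x \<subseteq> {..<n} \<and> insert j R \<subseteq> bits k (card x))
     = monoid.mult (BF_ring n) (esym n (2 ^ j)) (\<lambda>x. x \<subseteq> {..<n} \<and> R \<subseteq> bits k (card x))"
    using insert.prems by (auto simp: BF_ring_simps bf_mult_def esym_power_of_two bits_def fun_eq_iff)
  have "esym n (2 ^ j) \<in> sigma_ring n k" using insert.prems by (intro generate_ring.incl) simp
  moreover have "(\<lambda>x. x \<subseteq> {..<n} \<and> R \<subseteq> bits k (card x)) \<in> sigma_ring n k"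
    using insert.prems by (intro insert.IH) simp
  ultimately show ?case unfolding product by (rule generate_ring.eng_mult)
qed

lemma zero_in_sigma_ring: "bf_zero \<in> sigma_ring n k"
proof -
  have "a_inv (BF_ring n) (monoid.one (BF_ring n)) = bf_one n"
    using BF_a_inv[of "bf_one n" n] by (simp add: BF_ring_simps BF_def bf_one_def)
  then have "ring.add (BF_ring n) (monoid.one (BF_ring n)) (a_inv (BF_ring n) (monoid.one (BF_ring n))) = bf_zero"
    by (simp add: BF_ring_simps bf_add_def bf_zero_def)
  moreover have "ring.add (BF_ring n) (monoid.one (BF_ring n)) (a_inv (BF_ring n) (monoid.one (BF_ring n)))
      \<in> sigma_ring n k"
    by (rule generate_ring.eng_add[OF generate_ring.one generate_ring.a_inv[OF generate_ring.one]])
  ultimately show ?thesis by simp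
qed

lemma tau_anf_sum_in_sigma_ring:
  "finite I \<Longrightarrow> I \<subseteq> {..<2 ^ k} \<Longrightarrow>
   (\<lambda>x. x \<subseteq> {..<n} \<and> odd (card {i\<in>I. bits k i \<subseteq> bits k (card x)})) \<in> sigma_ring n k"
proof (induction I rule: finite_induct)
  case empty
  then show ?case using zero_in_sigma_ring by (simp add: bf_zero_def)
next
  case (insert i I)
  have mono: "(\<lambda>x. x \<subseteq> {..<n} \<and> bits k i \<subseteq> bits k (card x)) \<in> sigma_ring n k"
    by (rule tau_monomial_in_sigma_ring) (auto simp: bits_def)
  have "(\<lambda>x. x \<subseteq> {..<n} \<and> odd (card {i'\<in>insert i I. bits k i' \<subseteq> bits k (card x)}))
     = ring.add (BF_ring n) (\<lambda>x. x \<subseteq> {..<n} \<and> bits k i \<subseteq> bits k (card x))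
         (\<lambda>x. x \<subseteq> {..<n} \<and> odd (card {i\<in>I. bits k i \<subseteq> bits k (card x)}))"
  proof (rule ext)
    fix x :: "nat set"
    have "{i'\<in>insert i I. bits k i' \<subseteq> bits k (card x)} =
      (if bits k i \<subseteq> bits k (card x) then insert i {i\<in>I. bits k i \<subseteq> bits k (card x)} else {i\<in>I. bits k i \<subseteq> bits k (card x)})"
      by auto
    then show "(x \<subseteq> {..<n} \<and> odd (card {i'\<in>insert i I. bits k i' \<subseteq> bits k (card x)})) =
      ring.add (BF_ring n) (\<lambda>x. x \<subseteq> {..<n} \<and> bits k i \<subseteq> bits k (card x))
         (\<lambda>x. x \<subseteq> {..<n} \<and> odd (card {i\<in>I. bits k i \<subseteq> bits k (card x)})) x"
      using insert(1,2) unfolding BF_ring_simps bf_add_def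
      by (cases "bits k i \<subseteq> bits k (card x)"; cases "x \<subseteq> {..<n}") simp_all
  qed
  moreover have "(\<lambda>x. x \<subseteq> {..<n} \<and> odd (card {i\<in>I. bits k i \<subseteq> bits k (card x)})) \<in> sigma_ring n k"
    using insert by simp
  ultimately show ?case using generate_ring.eng_add[OF mono] by simp
qed

lemma tau_image_in_sigma_ring: "F \<in> BF k \<Longrightarrow> tau n k F \<in> sigma_ring n k"
proof -
  assume "F \<in> BF k"
  then obtain c where c: "F = anf k c" using BF_has_anf by blast
  have "tau n k F = (\<lambda>x. x \<subseteq> {..<n} \<and> odd (card {i\<in>{i. i < 2 ^ k \<and> c i}. bits k i \<subseteq> bits k (card x)}))"
    unfolding c by (rule ext) (simp add: tau_weight anf_def bits_subset)
  then show ?thesis using tau_anf_sum_in_sigma_ring[of "{i. i < 2 ^ k \<and> c i}" k n] by auto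
qed

lemma sigma_ring_eq_tau_image: "sigma_ring n k = tau n k ` BF k"
  using sigma_ring_in_tau_image tau_image_in_sigma_ring by blast


theorem theorem2:
  fixes n k :: nat
  assumes "k \<ge> 1" and "2 ^ k \<le> n + 1"
  shows "SB_deg n (2 ^ k - 1) = generate_ring (BF_ring n) ((\<lambda>j. esym n (2 ^ j)) ` {..<k})
         \<and> tau n k \<in> ring_iso (BF_ring k) (SB_deg_ring n (2 ^ k - 1))"
proof
  show "SB_deg n (2 ^ k - 1) = sigma_ring n k"
    using sigma_ring_eq_tau_image tau_image by simp
  have "bij_betw (tau n k) (BF k) (SB_deg n (2 ^ k - 1))"
    using tau_inj[OF assms(2)] tau_image by (simp add: bij_betw_def)
  then show "tau n k \<in> ring_iso (BF_ring k) (SB_deg_ring n (2 ^ k - 1))"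
    using tau_ring_hom by (simp add: ring_iso_def BF_ring_simps SB_ring_simps)
qed

end
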